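(* Let $\alpha\in\alpha_0\mathbb{Z}$ with $\frac{1}{\sqrt2}\le|\alpha|\le1$, $d=\alpha^2/2$, and fix $s\in\mathbb{Z}$. Then the vectors $(Y_{\alpha,-n-d}\otimes Y_{\alpha,-n-d-s})(\Omega_0\otimes\Omega_0)$, $n\in\mathbb{Z}$, are mutually orthogonal and the series $\sum_{n\in\mathbb{Z}}(Y_{\alpha,-n-d}\otimes Y_{\alpha,-n-d-s})(\Omega_0\otimes\Omega_0)$ does not converge in $\hat{\mathcal H}\otimes\hat{\mathcal H}$ (the sum of the squared norms of its terms is infinite). Consequently no operator of the form $\sum_n Y_{\alpha,-n-d}\otimes Y_{\alpha,-n-d-s}$ can be defined by this series on a domain containing $\Omega_0\otimes\Omega_0$.
   Context: For $\beta\in\mathbb{R}$ let $\mathcal H_\beta$ be the Hilbert space carrying a unitary representation of the Heisenberg algebra: operators $J_{\beta,n}$, $n\in\mathbb{Z}$, with $[J_{\beta,m},J_{\beta,n}]=m\,\delta_{m+n,0}$, $J_{\beta,n}^*=J_{\beta,-n}$, $J_{\beta,0}=\beta\cdot\mathbf 1$, and a cyclic unit vector $\Omega_\beta$ with $J_{\beta,n}\Omega_\beta=0$ for $n>0$; $\mathcal H_\beta$ is the closure of the span $\mathcal H_\beta^{\rm fin}$ of the vectors $J_{\beta,-n_1}\cdots J_{\beta,-n_k}\Omega_\beta$, $n_i>0$. Fix $\alpha_0\in\mathbb{R}$ with $0<|\alpha_0|\le1$ and set $\hat{\mathcal H}=\bigoplus_{j\in\mathbb{Z}}\mathcal H_{j\alpha_0}$,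 $\hat J_n=\bigoplus_j J_{j\alpha_0,n}$. For $\alpha\in\alpha_0\mathbb{Z}$ let $c_\alpha$ be the unitary on $\hat{\mathcal H}$ mapping $\mathcal H_\beta\to\mathcal H_{\beta+\alpha}$ by $c_\alpha \hat J_{-n_1}\cdots\hat J_{-n_k}\Omega_\beta=\hat J_{-n_1}\cdots\hat J_{-n_k}\Omega_{\beta+\alpha}$ ($n_i>0$). Define the formal series $E^{\pm}(\alpha,z)=\exp\bigl(\mp\sum_{n>0}\frac{\alpha\hat J_{\pm n}}{n}z^{\mp n}\bigr)$ and $Y_\alpha(z)=c_\alpha E^-(\alpha,z)E^+(\alpha,z)z^{\alpha\hat J_0}$, where $z^{\alpha\hat J_0}$ acts as $z^{\alpha\beta}$ on $\mathcal H_\beta$. With $d=\alpha^2/2$ write $Y_\alpha(z)=\sum_{s\in\mathbb{R}}Y_{\alpha,s}z^{-s-d}$; the coefficient $Y_{\alpha,s}$ maps $\mathcal H_\beta$ into $\mathcal H_{\beta+\alpha}$ and is nonzero on $\mathcal H_\beta$ only for $s\in\mathbb{Z}-\alpha\beta-d$. For $|\alpha|\le1$ these are bounded operators, and one has $\|Y_{\alpha,-n-d}\Omega_0\|^2=\binom{2d+n-1}{n}=\frac{\Gamma(2d+n)}{\Gamma(n+1)\Gamma(2d)}$ for integers $n\ge0$ (and $Y_{\alpha,-n-d}\Omega_0=0$ for $n<0$). *)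

theory Defs
  imports "HOL-Analysis.Analysis" "HOL-Library.Poly_Mapping"
begin

text \<open>Concrete (Fock / polynomial) model of hat-H^fin = direct sum over j of H_{j alpha0}^fin.
  A basis vector is a pair (j, m): j the sector (beta = j*alpha0), m a monomial,
  m i = multiplicity of the creation operator J_{-(i+1)}.\<close>

type_synonym mono = "nat \<Rightarrow>\<^sub>0 nat"
type_synonym vec = "int \<times> mono \<Rightarrow> complex"

definition fin_vec :: "vec \<Rightarrow> bool" where
  "fin_vec f \<longleftrightarrow> finite {b. f b \<noteq> 0}"

text \<open>squared norm of the basis vector J_{-1}^{m 0} J_{-2}^{m 1} ... Omega\<close>
definition weight :: "mono \<Rightarrow> real" where
  "weight m = (\<Prod>i\<in>Poly_Mapping.keys m. real (Suc i) ^ Poly_Mapping.lookup m i * fact (Poly_Mapping.lookup m i))"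

definition inner_vec :: "vec \<Rightarrow> vec \<Rightarrow> complex" where
  "inner_vec f g = (\<Sum>b | f b \<noteq> 0 \<and> g b \<noteq> 0. cnj (f b) * g b * complex_of_real (weight (snd b)))"

definition scal :: "complex \<Rightarrow> vec \<Rightarrow> vec" where
  "scal c f = (\<lambda>b. c * f b)"

text \<open>Heisenberg operators hat J_n: J_{-n} creation (multiplication by x_n),
  J_n = n d/dx_n for n>0, J_0 = beta on sector beta = j*alpha0.\<close>
definition J :: "real \<Rightarrow> int \<Rightarrow> vec \<Rightarrow> vec" where
  "J \<alpha>0 n f = (\<lambda>(j, m).
     if n < 0 then
       (if 0 < Poly_Mapping.lookup m (nat (- n) - 1)
        then f (j, m - Poly_Mapping.single (nat (- n) - 1) 1) else 0)
     else if 0 < n then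
       of_int n * of_nat (Suc (Poly_Mapping.lookup m (nat n - 1))) * f (j, m + Poly_Mapping.single (nat n - 1) 1)
     else complex_of_real (of_int j * \<alpha>0) * f (j, m))"

definition vac :: "int \<Rightarrow> vec" where
  "vac j = (\<lambda>b. if b = (j, 0) then 1 else 0)"

text \<open>c_alpha for alpha = a*alpha0: maps H_beta to H_{beta+alpha}, monomials unchanged\<close>
definition cop :: "real \<Rightarrow> real \<Rightarrow> vec \<Rightarrow> vec" where
  "cop \<alpha>0 \<alpha> f = (\<lambda>(j, m). f (j - (THE a::int. \<alpha> = of_int a * \<alpha>0), m))"

definition compositions :: "nat \<Rightarrow> nat list set" where
  "compositions k = {ks. (\<forall>x\<in>set ks. 0 < x) \<and> sum_list ks = k}"

text \<open>coefficient of z^k in E^-(alpha,z) = exp(X), X = sum_{n>0} (alpha/n) J_{-n} z^n: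
  sum over r of (1/r!) * [z^k] X^r\<close>
definition Em :: "real \<Rightarrow> real \<Rightarrow> nat \<Rightarrow> vec \<Rightarrow> vec" where
  "Em \<alpha>0 \<alpha> k f = (\<lambda>b. \<Sum>ks\<in>compositions k.
      complex_of_real (1 / fact (length ks)) *
      foldr (\<lambda>n g. scal (complex_of_real (\<alpha> / real n)) (J \<alpha>0 (- int n) g)) ks f b)"

text \<open>coefficient of z^{-l} in E^+(alpha,z) = exp(-sum_{n>0} (alpha/n) J_n z^{-n})\<close>
definition Ep :: "real \<Rightarrow> real \<Rightarrow> nat \<Rightarrow> vec \<Rightarrow> vec" where
  "Ep \<alpha>0 \<alpha> l f = (\<lambda>b. \<Sum>ks\<in>compositions l.
      complex_of_real (1 / fact (length ks)) *
      foldr (\<lambda>n g. scal (complex_of_real (- \<alpha> / real n)) (J \<alpha>0 (int n) g)) ks f b)"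

text \<open>Y_{alpha,s}: coefficient of z^{-s-d} (d = alpha^2/2) in
  Y_alpha(z) = c_alpha E^-(alpha,z) E^+(alpha,z) z^{alpha J_0}; on sector beta = j*alpha0 the
  term E^-_k E^+_l contributes to z^{k - l + alpha*beta}.\<close>
definition Ycoef :: "real \<Rightarrow> real \<Rightarrow> real \<Rightarrow> vec \<Rightarrow> vec" where
  "Ycoef \<alpha>0 \<alpha> s f = cop \<alpha>0 \<alpha> (\<lambda>(j, m).
      \<Sum>\<^sub>\<infinity>p \<in> {p :: nat \<times> nat. real (fst p) - real (snd p) + \<alpha> * (of_int j * \<alpha>0) = - s - \<alpha>\<^sup>2 / 2}.
        Em \<alpha>0 \<alpha> (fst p) (Ep \<alpha>0 \<alpha> (snd p) f) (j, m))"

type_synonym tvec = "(int \<times> mono) \<times> (int \<times> mono) \<Rightarrow> complex"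

definition tensor :: "vec \<Rightarrow> vec \<Rightarrow> tvec" where
  "tensor f g = (\<lambda>(b1, b2). f b1 * g b2)"

definition inner_tens :: "tvec \<Rightarrow> tvec \<Rightarrow> complex" where
  "inner_tens F G = (\<Sum>b | F b \<noteq> 0 \<and> G b \<noteq> 0.
      cnj (F b) * G b * complex_of_real (weight (snd (fst b)) * weight (snd (snd b))))"

definition tnorm :: "tvec \<Rightarrow> real" where
  "tnorm F = sqrt (Re (inner_tens F F))"

definition psum :: "(int \<Rightarrow> tvec) \<Rightarrow> nat \<Rightarrow> tvec" where
  "psum v N = (\<lambda>x. \<Sum>n\<in>{- int N..int N}. v n x)"

end

theory Submission
  imports Defs "HOL-Combinatorics.Multiset_Permutations"
begin

text \<open>
  \<open>E\<^sup>+\<close> kills the vacuum, so \<open>Y\<^sub>\<alpha>\<^sub>,\<^sub>-\<^sub>n\<^sub>-\<^sub>d \<Omega>\<^sub>0\<close> is \<open>c\<^sub>\<alpha>\<close> applied to the \<open>z\<^sup>n\<close>-coefficient of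
  \<open>exp (\<Sum>k>0. \<alpha> J\<^sub>-\<^sub>k z\<^sup>k / k) \<Omega>\<^sub>0\<close>, a combination of the monomials \<open>\<Prod>k\<in>#M. J\<^sub>-\<^sub>k \<Omega>\<^sub>\<alpha>\<close> over the partitions
  \<open>M\<close> of \<open>n\<close>. Vectors of different degree \<open>n\<close> are orthogonal, hence so are the tensor products.
  Summing the squared norms of the components over partitions is the cycle index computation
  \<open>\<Sum>\<^sub>M \<Prod>\<^sub>x (\<alpha>\<^sup>2/x)^m\<^sub>x / m\<^sub>x! = pochhammer (\<alpha>\<^sup>2) n / n!\<close>, and for \<open>\<alpha>\<^sup>2 \<ge> 1/2\<close> this is at least
  \<open>1 / (2 \<surd>n)\<close>. The squared norms of the terms of the series are thus bounded below by a
  multiple of \<open>1/n\<close>; they are not summable, and by Pythagoras the symmetric partial sums are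
  not a Cauchy sequence.
\<close>

section \<open>Compositions and partitions\<close>

lemma compositions_0: "compositions 0 = {[]}"
  by (auto simp: compositions_def) (metis neq_Nil_conv list.set_intros(1) less_irrefl)

lemma finite_compositions: "finite (compositions k)"
proof (rule finite_subset)
  show "compositions k \<subseteq> {xs. set xs \<subseteq> {0..k} \<and> length xs \<le> k}"
  proof
    fix xs assume "xs \<in> compositions k"
    hence pos: "\<forall>x\<in>set xs. 0 < x" and sum: "sum_list xs = k" by (auto simp: compositions_def)
    have "length xs \<le> sum_list xs" using pos by (induction xs) (auto simp: Suc_le_eq)
    then show "xs \<in> {xs. set xs \<subseteq> {0..k} \<and> length xs \<le> k}"
      using sum member_le_sum_list by fastforce
  qed
qed (rule finite_lists_length_le, simp)

definition partitions :: "nat \<Rightarrow> nat multiset set" where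
  "partitions k = {M. (\<forall>x\<in>#M. 0 < x) \<and> sum_mset M = k}"

lemma partitions_eq_mset_compositions: "partitions k = mset ` compositions k"
proof (intro set_eqI iffI)
  fix M assume M: "M \<in> partitions k"
  obtain ks where ks: "mset ks = M" using ex_mset by blast
  then have "ks \<in> compositions k"
    using M by (auto simp: partitions_def compositions_def sum_mset_sum_list simp flip: ks)
  then show "M \<in> mset ` compositions k" using ks by blast
qed (auto simp: partitions_def compositions_def sum_mset_sum_list)

lemma finite_partitions: "finite (partitions k)"
  by (simp add: partitions_eq_mset_compositions finite_compositions)

lemma partitions_0: "partitions 0 = {{#}}"
proof -
  have "M = {#}" if "\<forall>x\<in>#M. 0 < x" "sum_mset M = 0" for M :: "nat multiset"
    using that by (cases M) auto
  then show ?thesis by (auto simp: partitions_def)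
qed

lemma sum_count_mult_eq_sum_mset:
  fixes M :: "nat multiset"
  assumes "finite S" "set_mset M \<subseteq> S"
  shows "(\<Sum>x\<in>S. count M x * x) = sum_mset M"
  using assms(2)
proof (induction M)
  case (add y M)
  have "(\<Sum>x\<in>S. count (add_mset y M) x * x) = (\<Sum>x\<in>S. count M x * x + (if x = y then y else 0))"
    by (rule sum.cong) auto
  then show ?case using add assms(1) by (simp add: sum.distrib)
qed simp

lemma sum_partitions_remove_part:
  "(\<Sum>M\<in>partitions k. \<Sum>x\<in>set_mset M. f (M - {#x#})) = (\<Sum>x\<in>{1..k}. \<Sum>M\<in>partitions (k - x). f M)"
proof -
  have "(\<Sum>M\<in>partitions k. \<Sum>x\<in>set_mset M. f (M - {#x#})) = (\<Sum>(M, x)\<in>Sigma (partitions k) set_mset. f (M - {#x#}))"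
    by (rule sum.Sigma) (auto simp: finite_partitions)
  also have "\<dots> = (\<Sum>(x, M)\<in>Sigma {1..k} (\<lambda>x. partitions (k - x)). f M)"
  proof (rule sum.reindex_bij_witness[where i = "\<lambda>(x, M). (add_mset x M, x)" and j = "\<lambda>(M, x). (x, M - {#x#})"])
    fix p assume "p \<in> Sigma (partitions k) set_mset"
    then obtain M x where p: "p = (M, x)" "M \<in> partitions k" "x \<in># M" by auto
    then have M: "M = add_mset x (M - {#x#})" by simp
    have "0 < x" "\<forall>y\<in>#M - {#x#}. 0 < y" using p(2,3) by (auto simp: partitions_def dest: in_diffD)
    moreover have "x + sum_mset (M - {#x#}) = k"
      using p(2) by (subst (asm) M) (simp add: partitions_def)
    ultimately show "(\<lambda>(M, x). (x, M - {#x#})) p \<in> Sigma {1..k} (\<lambda>x. partitions (k - x))"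
      using p(1) by (auto simp: partitions_def)
    show "(\<lambda>(x, M). (add_mset x M, x)) ((\<lambda>(M, x). (x, M - {#x#})) p) = p"
      using p(1) M by simp
  next
    fix q assume "q \<in> Sigma {1..k} (\<lambda>x. partitions (k - x))"
    then show "(\<lambda>(x, M). (add_mset x M, x)) q \<in> Sigma (partitions k) set_mset"
      by (auto simp: partitions_def)
  qed auto
  also have "\<dots> = (\<Sum>x\<in>{1..k}. \<Sum>M\<in>partitions (k - x). f M)"
    by (rule sum.Sigma[symmetric]) (auto simp: finite_partitions)
  finally show ?thesis .
qed

text \<open>\<open>fact k * cycle_weight c M\<close> is the number of permutations of \<open>{1..k}\<close> with cycle type \<open>M\<close>,
  each counted with weight \<open>c\<close> to the number of its cycles; summing over \<open>M\<close> gives \<open>pochhammer c k\<close>.\<close>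
definition cycle_weight :: "real \<Rightarrow> nat multiset \<Rightarrow> real" where
  "cycle_weight c M = (\<Prod>x\<in>set_mset M. (c / real x) ^ count M x / fact (count M x))"

lemma cycle_weight_remove:
  assumes "x \<in># M" "0 < x"
  shows "real x * real (count M x) * cycle_weight c M = c * cycle_weight c (M - {#x#})"
proof -
  let ?w = "\<lambda>M x. (c / real x) ^ count M x / fact (count M x)"
  let ?S = "set_mset M"
  have x: "x \<in> ?S" using assms by simp
  obtain r where r: "count M x = Suc r" using assms by (cases "count M x") (auto simp: not_in_iff[symmetric])
  have rest: "(\<Prod>y\<in>?S - {x}. ?w (M - {#x#}) y) = (\<Prod>y\<in>?S - {x}. ?w M y)"
    by (rule prod.cong) auto
  have "cycle_weight c (M - {#x#}) = (\<Prod>y\<in>?S. ?w (M - {#x#}) y)"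
    unfolding cycle_weight_def
    by (rule prod.mono_neutral_left) (auto simp: not_in_iff dest: in_diffD)
  also have "\<dots> = ?w (M - {#x#}) x * (\<Prod>y\<in>?S - {x}. ?w M y)"
    by (simp add: prod.remove[OF _ x] rest)
  finally have minus: "cycle_weight c (M - {#x#}) = (c / real x) ^ r / fact r * (\<Prod>y\<in>?S - {x}. ?w M y)"
    using r by simp
  have plus: "cycle_weight c M = (c / real x) ^ Suc r / fact (Suc r) * (\<Prod>y\<in>?S - {x}. ?w M y)"
    unfolding cycle_weight_def using r by (simp add: prod.remove[OF _ x])
  have "real x * real (Suc r) * ((c / real x) ^ Suc r / fact (Suc r)) = c * ((c / real x) ^ r / fact r)"
    using assms(2) by (simp add: field_simps del: of_nat_Suc)
  then show ?thesis
    unfolding plus minus r by (simp only: mult.assoc[symmetric])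
qed

text \<open>Counting a partition of \<open>k\<close> once for each of its parts, weighted by the part, gives \<open>k\<close>.\<close>
lemma sum_partitions_cycle_weight_rec:
  "real k * (\<Sum>M\<in>partitions k. cycle_weight c M) = c * (\<Sum>i<k. \<Sum>M\<in>partitions i. cycle_weight c M)"
proof -
  have "real k * cycle_weight c M = (\<Sum>x\<in>set_mset M. c * cycle_weight c (M - {#x#}))"
    if "M \<in> partitions k" for M
  proof -
    have "k = (\<Sum>x\<in>set_mset M. count M x * x)"
      using that sum_count_mult_eq_sum_mset[of "set_mset M" M] by (simp add: partitions_def)
    then have "real k * cycle_weight c M = (\<Sum>x\<in>set_mset M. real x * real (count M x) * cycle_weight c M)"
      by (simp add: sum_distrib_right sum_distrib_left mult.commute)
    also have "\<dots> = (\<Sum>x\<in>set_mset M. c * cycle_weight c (M - {#x#}))"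
      using that by (intro sum.cong refl cycle_weight_remove) (auto simp: partitions_def)
    finally show ?thesis .
  qed
  then have "real k * (\<Sum>M\<in>partitions k. cycle_weight c M) =
      (\<Sum>M\<in>partitions k. \<Sum>x\<in>set_mset M. c * cycle_weight c (M - {#x#}))"
    by (simp add: sum_distrib_left)
  also have "\<dots> = c * (\<Sum>x\<in>{1..k}. \<Sum>M\<in>partitions (k - x). cycle_weight c M)"
    using sum_partitions_remove_part[where f = "\<lambda>M. c * cycle_weight c M"] by (simp add: sum_distrib_left)
  also have "(\<Sum>x\<in>{1..k}. \<Sum>M\<in>partitions (k - x). cycle_weight c M) = (\<Sum>i<k. \<Sum>M\<in>partitions i. cycle_weight c M)"
    by (rule sum.reindex_bij_witness[of _ "\<lambda>i. k - i" "\<lambda>x. k - x"]) auto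
  finally show ?thesis .
qed

lemma sum_partitions_cycle_weight:
  "(\<Sum>M\<in>partitions k. cycle_weight c M) = pochhammer c k / fact k"
proof (induction k)
  case 0 then show ?case by (simp add: partitions_0 cycle_weight_def)
next
  case (Suc k)
  have "real (Suc k) * (\<Sum>M\<in>partitions (Suc k). cycle_weight c M) =
      (real k + c) * (\<Sum>M\<in>partitions k. cycle_weight c M)"
    using sum_partitions_cycle_weight_rec[of "Suc k" c] sum_partitions_cycle_weight_rec[of k c]
    by (simp add: algebra_simps)
  then show ?case
    using Suc by (simp add: pochhammer_Suc field_simps del: of_nat_Suc)
qed

lemma pochhammer_div_fact_lower:
  fixes c :: real
  assumes c: "1/2 \<le> c" and k: "1 \<le> k"
  shows "1 \<le> 4 * real k * (pochhammer c k / fact k)\<^sup>2"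
  using k
proof (induction k rule: dec_induct)
  case base
  have "(1/2)\<^sup>2 \<le> c\<^sup>2" by (rule power_mono) (use c in simp_all)
  then show ?case by (simp add: power2_eq_square)
next
  case (step k)
  define A where "A = pochhammer c k / fact k"
  define B where "B = pochhammer c (Suc k) / fact (Suc k)"
  have A: "0 \<le> A" using c by (simp add: A_def pochhammer_nonneg)
  have "real (Suc k) * B = (real k + c) * A"
    by (simp add: A_def B_def pochhammer_Suc field_simps del: of_nat_Suc)
  moreover have "(real k + 1/2) * A \<le> (real k + c) * A"
    using A c by (intro mult_right_mono) auto
  ultimately have AB: "((real k + 1/2) * A)\<^sup>2 \<le> (real (Suc k) * B)\<^sup>2"
    using A by (intro power_mono) auto
  have "real (Suc k) * 1 \<le> real (Suc k) * (4 * real k * A\<^sup>2)"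
    by (rule mult_left_mono) (use step.IH in \<open>simp_all add: A_def\<close>)
  also have "\<dots> = 4 * (real k * real (Suc k) * A\<^sup>2)"
    by (simp add: algebra_simps)
  also have "\<dots> \<le> 4 * ((real k + 1/2) * A)\<^sup>2"
  proof -
    have "real k * real (Suc k) \<le> (real k + 1/2)\<^sup>2" by (simp add: power2_eq_square algebra_simps)
    then show ?thesis by (simp add: power_mult_distrib mult_right_mono)
  qed
  also have "\<dots> \<le> 4 * (real (Suc k) * B)\<^sup>2" using AB by simp
  also have "\<dots> = real (Suc k) * (4 * real (Suc k) * B\<^sup>2)"
    by (simp only: power2_eq_square mult_ac)
  finally have "real (Suc k) * 1 \<le> real (Suc k) * (4 * real (Suc k) * B\<^sup>2)" .
  then show ?case unfolding B_def by (rule mult_left_le_imp_le) simp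
qed

section \<open>Monomials\<close>

text \<open>The monomial \<open>\<Prod>k\<in>#M. J\<^sub>-\<^sub>k\<close>; \<open>J\<^sub>-\<^sub>k\<close> is recorded at index \<open>k - 1\<close>.\<close>
definition mono_of :: "nat multiset \<Rightarrow> mono" where
  "mono_of M = (\<Sum>k\<in>#M. Poly_Mapping.single (k - 1) 1)"

lemma mono_of_add_mset: "mono_of (add_mset k M) = Poly_Mapping.single (k - 1) 1 + mono_of M"
  by (simp add: mono_of_def)

lemma lookup_mono_of: "\<forall>x\<in>#M. 0 < x \<Longrightarrow> Poly_Mapping.lookup (mono_of M) i = count M (Suc i)"
  by (induction M) (auto simp: mono_of_def lookup_add lookup_single)

lemma mono_of_eq_iff:
  assumes "\<forall>x\<in>#M. 0 < x" "\<forall>x\<in>#M'. 0 < x"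
  shows "mono_of M = mono_of M' \<longleftrightarrow> M = M'"
proof
  assume eq: "mono_of M = mono_of M'"
  show "M = M'"
  proof (rule multiset_eqI)
    fix x show "count M x = count M' x"
    proof (cases x)
      case 0 then show ?thesis using assms by (metis count_eq_zero_iff less_irrefl)
    next
      case (Suc i) then show ?thesis
        using lookup_mono_of[OF assms(1), of i] lookup_mono_of[OF assms(2), of i] eq by simp
    qed
  qed
qed simp

lemma minus_single_eq_iff:
  "(0 < Poly_Mapping.lookup m i \<and> m - Poly_Mapping.single i 1 = p) \<longleftrightarrow> m = Poly_Mapping.single i (1::nat) + p"
proof
  assume h: "0 < Poly_Mapping.lookup m i \<and> m - Poly_Mapping.single i 1 = p"
  show "m = Poly_Mapping.single i 1 + p"
  proof (rule poly_mapping_eqI)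
    fix k
    show "Poly_Mapping.lookup m k = Poly_Mapping.lookup (Poly_Mapping.single i 1 + p) k"
      using h by (cases "k = i") (auto simp: lookup_add lookup_minus lookup_single simp flip: h[THEN conjunct2])
  qed
next
  assume h: "m = Poly_Mapping.single i 1 + p"
  have "m - Poly_Mapping.single i 1 = p"
    by (rule poly_mapping_eqI) (simp add: h lookup_add lookup_minus lookup_single)
  then show "0 < Poly_Mapping.lookup m i \<and> m - Poly_Mapping.single i 1 = p"
    by (simp add: h lookup_add)
qed

lemma single_plus_ne_0: "(m :: mono) + Poly_Mapping.single i (Suc j) \<noteq> 0"
proof
  assume "m + Poly_Mapping.single i (Suc j) = 0"
  then have "Poly_Mapping.lookup (m + Poly_Mapping.single i (Suc j)) i = 0" by simp
  then show False by (simp add: lookup_add)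
qed

lemma weight_mono_of:
  assumes pos: "\<forall>x\<in>#M. 0 < x"
  shows "weight (mono_of M) = (\<Prod>x\<in>set_mset M. real x ^ count M x * fact (count M x))"
proof -
  have keys: "Poly_Mapping.keys (mono_of M) = (\<lambda>x. x - 1) ` set_mset M"
  proof (rule set_eqI)
    fix i
    have "i \<in> Poly_Mapping.keys (mono_of M) \<longleftrightarrow> Suc i \<in># M"
      by (simp add: in_keys_iff lookup_mono_of[OF pos] not_in_iff)
    also have "\<dots> \<longleftrightarrow> i \<in> (\<lambda>x. x - 1) ` set_mset M"
    proof
      assume "Suc i \<in># M" then show "i \<in> (\<lambda>x. x - 1) ` set_mset M"
        by (metis diff_Suc_1 image_eqI)
    next
      assume "i \<in> (\<lambda>x. x - 1) ` set_mset M"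
      then obtain x where "x \<in># M" "i = x - 1" by auto
      then show "Suc i \<in># M" using pos by auto
    qed
    finally show "i \<in> Poly_Mapping.keys (mono_of M) \<longleftrightarrow> i \<in> (\<lambda>x. x - 1) ` set_mset M" .
  qed
  have inj: "inj_on (\<lambda>x. x - 1) (set_mset M)"
    using pos by (auto simp: inj_on_def) (metis Suc_pred)
  show ?thesis
    unfolding weight_def keys prod.reindex[OF inj]
    by (rule prod.cong) (use pos in \<open>auto simp: lookup_mono_of\<close>)
qed

lemma weight_nonneg: "0 \<le> weight m"
  unfolding weight_def by (intro prod_nonneg) auto

section \<open>The vertex operator on the vacuum\<close>

lemma J_zero: "J \<alpha>0 n (\<lambda>_. 0) = (\<lambda>_. 0)"
  by (auto simp: J_def fun_eq_iff split: prod.splits)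

lemma scal_zero: "scal c (\<lambda>_. 0) = (\<lambda>_. 0)"
  by (simp add: scal_def)

lemma foldr_scal_J_zero: "foldr (\<lambda>n g. scal (c n) (J \<alpha>0 (e n) g)) ks (\<lambda>_. 0) = (\<lambda>_. 0)"
  by (induction ks) (auto simp: J_zero scal_zero)

lemma J_annihilates_vac: "0 < n \<Longrightarrow> J \<alpha>0 n (vac j) = (\<lambda>_. 0)"
  by (auto simp: J_def vac_def fun_eq_iff single_plus_ne_0 split: prod.splits)

lemma Ep_vac: "Ep \<alpha>0 \<alpha> l (vac j) = (if l = 0 then vac j else (\<lambda>_. 0))"
proof -
  have vac_killed: "foldr (\<lambda>n g. scal (c n) (J \<alpha>0 (int n) g)) ks (vac j) = (\<lambda>_. 0)"
    if "ks \<noteq> []" "\<forall>k\<in>set ks. 0 < k" for ks and c :: "nat \<Rightarrow> complex"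
  proof -
    obtain k ks' where ks: "ks = ks' @ [k]" using \<open>ks \<noteq> []\<close> by (metis rev_exhaust)
    then have "J \<alpha>0 (int k) (vac j) = (\<lambda>_. 0)" using that by (simp add: J_annihilates_vac)
    then show ?thesis by (simp add: ks scal_zero foldr_scal_J_zero)
  qed
  have "ks \<in> compositions l \<Longrightarrow> l \<noteq> 0 \<Longrightarrow>
      foldr (\<lambda>n g. scal (complex_of_real (- \<alpha> / real n)) (J \<alpha>0 (int n) g)) ks (vac j) = (\<lambda>_. 0)" for ks
    by (rule vac_killed) (auto simp: compositions_def)
  then show ?thesis
    by (cases "l = 0") (simp_all add: Ep_def compositions_0)
qed

lemma foldr_creation_vac:
  assumes "\<forall>k\<in>set ks. 0 < k"
  shows "foldr (\<lambda>n g. scal (c n) (J \<alpha>0 (- int n) g)) ks (vac j) =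
    (\<lambda>(i, m). if i = j \<and> m = mono_of (mset ks) then (\<Prod>k\<leftarrow>ks. c k) else 0)"
  using assms
proof (induction ks)
  case Nil then show ?case by (auto simp: vac_def mono_of_def fun_eq_iff)
next
  case (Cons k ks)
  have k: "0 < k" using Cons.prems by simp
  have IH: "foldr (\<lambda>n g. scal (c n) (J \<alpha>0 (- int n) g)) ks (vac j) =
      (\<lambda>(i, m). if i = j \<and> m = mono_of (mset ks) then (\<Prod>k\<leftarrow>ks. c k) else 0)"
    using Cons by simp
  have step: "scal (c k) (J \<alpha>0 (- int k) (\<lambda>(i, m). if i = j \<and> m = mono_of (mset ks) then (\<Prod>k\<leftarrow>ks. c k) else 0))
      = (\<lambda>(i, m). if i = j \<and> m = mono_of (mset (k # ks)) then (\<Prod>k\<leftarrow>k # ks. c k) else 0)"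
  proof (rule ext, clarify)
    fix i m
    show "scal (c k) (J \<alpha>0 (- int k) (\<lambda>(i, m). if i = j \<and> m = mono_of (mset ks) then (\<Prod>k\<leftarrow>ks. c k) else 0)) (i, m)
      = (if i = j \<and> m = mono_of (mset (k # ks)) then (\<Prod>k\<leftarrow>k # ks. c k) else 0)"
      using k minus_single_eq_iff[of m "k - 1" "mono_of (mset ks)"]
      by (auto simp: J_def scal_def mono_of_add_mset)
  qed
  show ?case by (simp only: foldr_Cons comp_apply IH step)
qed

definition Em_vac_coeff :: "real \<Rightarrow> nat \<Rightarrow> mono \<Rightarrow> real" where
  "Em_vac_coeff \<alpha> k m = (\<Sum>ks\<in>compositions k.
      if m = mono_of (mset ks) then (\<Prod>k\<leftarrow>ks. \<alpha> / real k) / fact (length ks) else 0)"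

lemma Em_vac: "Em \<alpha>0 \<alpha> k (vac j) = (\<lambda>(i, m). if i = j then complex_of_real (Em_vac_coeff \<alpha> k m) else 0)"
proof -
  have creation: "ks \<in> compositions k \<Longrightarrow>
      foldr (\<lambda>n g. scal (complex_of_real (\<alpha> / real n)) (J \<alpha>0 (- int n) g)) ks (vac j) =
      (\<lambda>(i, m). if i = j \<and> m = mono_of (mset ks) then (\<Prod>k\<leftarrow>ks. complex_of_real (\<alpha> / real k)) else 0)" for ks
    by (rule foldr_creation_vac) (auto simp: compositions_def)
  have prod: "(\<Prod>k\<leftarrow>ks. complex_of_real \<alpha> / of_nat k) = complex_of_real (\<Prod>k\<leftarrow>ks. \<alpha> / real k)" for ks
    by (induction ks) auto
  show ?thesis
    unfolding Em_def Em_vac_coeff_def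
    by (simp only: creation cong: sum.cong)
      (auto simp: fun_eq_iff prod of_real_sum intro!: sum.cong split: prod.splits)
qed

lemma Em_zero: "Em \<alpha>0 \<alpha> k (\<lambda>_. 0) = (\<lambda>_. 0)"
  by (simp add: Em_def foldr_scal_J_zero)

definition monomial_coeff :: "real \<Rightarrow> nat multiset \<Rightarrow> real" where
  "monomial_coeff \<alpha> M = (\<Prod>x\<in>set_mset M. (\<alpha> / real x) ^ count M x / fact (count M x))"

text \<open>A multiset \<open>M\<close> is the multiset of exactly \<open>size M! / \<Prod>x. count M x!\<close> compositions.\<close>
lemma Em_vac_coeff_mono_of:
  assumes M: "M \<in> partitions k"
  shows "Em_vac_coeff \<alpha> k (mono_of M) = monomial_coeff \<alpha> M"
proof -
  have pos: "\<forall>x\<in>#M. 0 < x" using M by (simp add: partitions_def)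
  let ?Q = "\<Prod>x\<in>set_mset M. (\<alpha> / real x) ^ count M x"
  let ?F = "\<Prod>x\<in>set_mset M. fact (count M x) :: real"
  have perms: "{ks \<in> compositions k. mset ks = M} = permutations_of_multiset M"
    using M by (auto simp: permutations_of_multiset_def partitions_def compositions_def sum_mset_sum_list)
  have "Em_vac_coeff \<alpha> k (mono_of M) =
      (\<Sum>ks\<in>compositions k. if mset ks = M then (\<Prod>k\<leftarrow>ks. \<alpha> / real k) / fact (length ks) else 0)"
    unfolding Em_vac_coeff_def
    by (rule sum.cong) (auto simp: mono_of_eq_iff[OF pos] compositions_def)
  also have "\<dots> = (\<Sum>ks\<in>permutations_of_multiset M. (\<Prod>k\<leftarrow>ks. \<alpha> / real k) / fact (length ks))"
    by (simp add: sum.inter_filter finite_compositions flip: perms)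
  also have "\<dots> = (\<Sum>ks\<in>permutations_of_multiset M. ?Q / fact (size M))"
  proof (rule sum.cong[OF refl])
    fix ks assume "ks \<in> permutations_of_multiset M"
    then have ks: "mset ks = M" by (simp add: permutations_of_multiset_def)
    have "(\<Prod>k\<leftarrow>ks. \<alpha> / real k) = prod_mset (image_mset (\<lambda>k. \<alpha> / real k) (mset ks))"
      by (metis mset_map prod_mset_prod_list)
    then show "(\<Prod>k\<leftarrow>ks. \<alpha> / real k) / fact (length ks) = ?Q / fact (size M)"
      by (simp add: ks image_prod_mset_multiplicity flip: ks)
  qed
  also have "\<dots> = real (card (permutations_of_multiset M)) * ?Q / fact (size M)"
    by simp
  also have "real (card (permutations_of_multiset M)) = fact (size M) / ?F"
  proof -
    have "real (card (permutations_of_multiset M) * (\<Prod>x\<in>set_mset M. fact (count M x))) = fact (size M)"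
      by (simp only: card_permutations_of_multiset_aux of_nat_fact)
    then have "real (card (permutations_of_multiset M)) * ?F = fact (size M)"
      by (simp only: of_nat_mult of_nat_prod of_nat_fact)
    then show ?thesis by (simp add: eq_divide_eq)
  qed
  finally show ?thesis
    by (simp add: monomial_coeff_def prod_dividef[symmetric])
qed

lemma Em_vac_coeff_eq_0: "m \<notin> mono_of ` partitions k \<Longrightarrow> Em_vac_coeff \<alpha> k m = 0"
  unfolding Em_vac_coeff_def by (rule sum.neutral) (auto simp: partitions_eq_mset_compositions)

lemma monomial_coeff_sq_weight:
  assumes pos: "\<forall>x\<in>#M. 0 < x"
  shows "(monomial_coeff \<alpha> M)\<^sup>2 * weight (mono_of M) = cycle_weight (\<alpha>\<^sup>2) M"
  unfolding monomial_coeff_def cycle_weight_def weight_mono_of[OF pos]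
    prod_power_distrib prod.distrib[symmetric]
proof (rule prod.cong[OF refl])
  fix x assume "x \<in># M"
  then have "0 < x" using pos by auto
  then show "((\<alpha> / real x) ^ count M x / fact (count M x))\<^sup>2 * (real x ^ count M x * fact (count M x)) =
      (\<alpha>\<^sup>2 / real x) ^ count M x / fact (count M x)"
    by (simp add: power_divide power2_eq_square power_mult_distrib field_simps)
qed

definition Yvac :: "real \<Rightarrow> int \<Rightarrow> int \<Rightarrow> vec" where
  "Yvac \<alpha> A n = (\<lambda>(j, m). if 0 \<le> n \<and> j = A then complex_of_real (Em_vac_coeff \<alpha> (nat n) m) else 0)"

lemma infsum_delta: "(\<Sum>\<^sub>\<infinity>p\<in>P. if p = q then x else 0) = (if q \<in> P then x else (0::'a::{comm_monoid_add, t2_space}))"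
proof -
  have "(\<Sum>\<^sub>\<infinity>p\<in>P. if p = q then x else 0) = (\<Sum>\<^sub>\<infinity>p\<in>P \<inter> {q}. if p = q then x else 0)"
    by (rule infsum_cong_neutral) auto
  then show ?thesis by (cases "q \<in> P") auto
qed

text \<open>On the vacuum only the term \<open>E\<^sup>-\<^sub>n E\<^sup>+\<^sub>0\<close> survives.\<close>
lemma Ycoef_vac:
  assumes "\<alpha>0 \<noteq> 0" and \<alpha>: "\<alpha> = of_int A * \<alpha>0" and t: "- t - \<alpha>\<^sup>2 / 2 = of_int n"
  shows "Ycoef \<alpha>0 \<alpha> t (vac 0) = Yvac \<alpha> A n"
proof -
  have A: "(THE a::int. \<alpha> = of_int a * \<alpha>0) = A"
    using assms by (intro the_equality) auto
  have coeff: "(\<Sum>\<^sub>\<infinity>p \<in> {p :: nat \<times> nat. real (fst p) - real (snd p) + \<alpha> * (of_int j * \<alpha>0) = - t - \<alpha>\<^sup>2 / 2}.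
        Em \<alpha>0 \<alpha> (fst p) (Ep \<alpha>0 \<alpha> (snd p) (vac 0)) (j, m)) =
      (if 0 \<le> n \<and> j = 0 then complex_of_real (Em_vac_coeff \<alpha> (nat n) m) else 0)"
    (is "infsum _ ?P = ?X") for j m
  proof -
    have "(\<Sum>\<^sub>\<infinity>p\<in>?P. Em \<alpha>0 \<alpha> (fst p) (Ep \<alpha>0 \<alpha> (snd p) (vac 0)) (j, m)) =
          (\<Sum>\<^sub>\<infinity>p\<in>?P. if p = (nat n, 0) then ?X else 0)"
    proof (rule infsum_cong)
      fix p assume "p \<in> ?P"
      then have "real (fst p) - real (snd p) + \<alpha> * (of_int j * \<alpha>0) = of_int n" using t by simp
      moreover obtain x y where p: "p = (x, y)" by force
      ultimately show "Em \<alpha>0 \<alpha> (fst p) (Ep \<alpha>0 \<alpha> (snd p) (vac 0)) (j, m) = (if p = (nat n, 0) then ?X else 0)"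
        by (cases "y = 0 \<and> j = 0") (auto simp: Ep_vac Em_vac Em_zero)
    qed
    also have "\<dots> = ?X"
      using t by (subst infsum_delta) auto
    finally show ?thesis .
  qed
  show ?thesis
  proof (rule ext, clarify)
    fix j m
    show "Ycoef \<alpha>0 \<alpha> t (vac 0) (j, m) = Yvac \<alpha> A n (j, m)"
      unfolding Ycoef_def cop_def A Yvac_def by (simp add: coeff)
  qed
qed

section \<open>Inner products\<close>

lemma inner_vec_eq_sum:
  assumes "finite S" "{b. f b \<noteq> 0 \<and> g b \<noteq> 0} \<subseteq> S"
  shows "inner_vec f g = (\<Sum>b\<in>S. cnj (f b) * g b * complex_of_real (weight (snd b)))"
  unfolding inner_vec_def by (rule sum.mono_neutral_left) (use assms in auto)

lemma inner_tens_eq_sum: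
  assumes "finite S" "{b. F b \<noteq> 0 \<and> G b \<noteq> 0} \<subseteq> S"
  shows "inner_tens F G =
    (\<Sum>b\<in>S. cnj (F b) * G b * complex_of_real (weight (snd (fst b)) * weight (snd (snd b))))"
  unfolding inner_tens_def by (rule sum.mono_neutral_left) (use assms in auto)

lemma inner_tens_tensor: "inner_tens (tensor f g) (tensor f' g') = inner_vec f f' * inner_vec g g'"
proof -
  have "{b. tensor f g b \<noteq> 0 \<and> tensor f' g' b \<noteq> 0} =
      {b. f b \<noteq> 0 \<and> f' b \<noteq> 0} \<times> {b. g b \<noteq> 0 \<and> g' b \<noteq> 0}"
    by (auto simp: tensor_def)
  then show ?thesis
    unfolding inner_tens_def inner_vec_def sum_product sum.cartesian_product
    by (intro sum.cong) (auto simp: tensor_def)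
qed

lemma finite_support_tensor:
  assumes "fin_vec f" "fin_vec g"
  shows "finite {b. tensor f g b \<noteq> 0}"
  by (rule finite_subset[of _ "{b. f b \<noteq> 0} \<times> {b. g b \<noteq> 0}"]) (use assms in \<open>auto simp: tensor_def fin_vec_def\<close>)

lemma inner_tens_self_nonneg: "0 \<le> Re (inner_tens F F)"
proof -
  have term_nonneg: "0 \<le> Re (cnj z * z * complex_of_real w)" if "0 \<le> w" for z w
    using that by simp
  show ?thesis
    unfolding inner_tens_def Re_sum by (intro sum_nonneg term_nonneg mult_nonneg_nonneg weight_nonneg)
qed

lemma tnorm_nonneg: "0 \<le> tnorm F"
  by (simp add: tnorm_def inner_tens_self_nonneg)

lemma tnorm_sq: "(tnorm F)\<^sup>2 = Re (inner_tens F F)"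
  by (simp add: tnorm_def inner_tens_self_nonneg)

lemma inner_tens_sum_orthogonal:
  assumes I: "finite I" and fin: "\<And>n. n \<in> I \<Longrightarrow> finite {b. F n b \<noteq> 0}"
    and orth: "\<And>n n'. n \<in> I \<Longrightarrow> n' \<in> I \<Longrightarrow> n \<noteq> n' \<Longrightarrow> inner_tens (F n) (F n') = 0"
  shows "inner_tens (\<lambda>b. \<Sum>n\<in>I. F n b) (\<lambda>b. \<Sum>n\<in>I. F n b) = (\<Sum>n\<in>I. inner_tens (F n) (F n))"
proof -
  define S where "S = (\<Union>n\<in>I. {b. F n b \<noteq> 0})"
  let ?w = "\<lambda>b. complex_of_real (weight (snd (fst b)) * weight (snd (snd b)))"
  have S: "finite S" using I fin by (simp add: S_def)
  have "inner_tens (\<lambda>b. \<Sum>n\<in>I. F n b) (\<lambda>b. \<Sum>n\<in>I. F n b) =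
      (\<Sum>b\<in>S. cnj (\<Sum>n\<in>I. F n b) * (\<Sum>n'\<in>I. F n' b) * ?w b)"
    by (rule inner_tens_eq_sum[OF S]) (auto simp: S_def dest: sum.not_neutral_contains_not_neutral)
  also have "\<dots> = (\<Sum>b\<in>S. \<Sum>n'\<in>I. \<Sum>n\<in>I. cnj (F n b) * F n' b * ?w b)"
    by (simp add: sum_distrib_left sum_distrib_right)
  also have "\<dots> = (\<Sum>n'\<in>I. \<Sum>n\<in>I. \<Sum>b\<in>S. cnj (F n b) * F n' b * ?w b)"
    by (simp only: sum.swap[of _ S])
  also have "\<dots> = (\<Sum>n'\<in>I. \<Sum>n\<in>I. inner_tens (F n) (F n'))"
    by (intro sum.cong refl inner_tens_eq_sum[symmetric] S) (auto simp: S_def)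
  also have "\<dots> = (\<Sum>n'\<in>I. inner_tens (F n') (F n'))"
  proof (rule sum.cong[OF refl])
    fix n' assume "n' \<in> I"
    then have "(\<Sum>n\<in>I. inner_tens (F n) (F n')) = (\<Sum>n\<in>I. if n = n' then inner_tens (F n') (F n') else 0)"
      by (intro sum.cong refl) (auto simp: orth)
    then show "(\<Sum>n\<in>I. inner_tens (F n) (F n')) = inner_tens (F n') (F n')"
      using I \<open>n' \<in> I\<close> by simp
  qed
  finally show ?thesis .
qed

lemma tnorm_psum_diff:
  assumes fin: "\<And>n. finite {b. v n b \<noteq> 0}"
    and orth: "\<And>n n'. n \<noteq> n' \<Longrightarrow> inner_tens (v n) (v n') = 0"
    and "N \<le> M"
  shows "(tnorm (\<lambda>x. psum v M x - psum v N x))\<^sup>2 =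
    (\<Sum>n\<in>{- int M..int M} - {- int N..int N}. (tnorm (v n))\<^sup>2)"
proof -
  let ?I = "{- int M..int M} - {- int N..int N}"
  have "psum v M x - psum v N x = (\<Sum>n\<in>?I. v n x)" for x
    using \<open>N \<le> M\<close> by (simp add: psum_def sum_diff)
  then have "(tnorm (\<lambda>x. psum v M x - psum v N x))\<^sup>2 = Re (\<Sum>n\<in>?I. inner_tens (v n) (v n))"
    by (simp add: tnorm_sq inner_tens_sum_orthogonal fin orth)
  then show ?thesis by (simp add: tnorm_sq)
qed

lemma Yvac_nonzero_imp:
  "Yvac \<alpha> A n (j, m) \<noteq> 0 \<Longrightarrow> 0 \<le> n \<and> j = A \<and> m \<in> mono_of ` partitions (nat n)"
  unfolding Yvac_def using Em_vac_coeff_eq_0 by (auto split: if_splits)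

lemma fin_vec_Yvac: "fin_vec (Yvac \<alpha> A n)"
  unfolding fin_vec_def
  by (rule finite_subset[of _ "{A} \<times> mono_of ` partitions (nat n)"])
    (auto dest: Yvac_nonzero_imp simp: finite_partitions)

lemma inner_vec_Yvac_orthogonal:
  assumes "n \<noteq> n'"
  shows "inner_vec (Yvac \<alpha> A n) (Yvac \<alpha> A n') = 0"
proof -
  have "{b. Yvac \<alpha> A n b \<noteq> 0 \<and> Yvac \<alpha> A n' b \<noteq> 0} = {}"
  proof (rule ccontr)
    assume "{b. Yvac \<alpha> A n b \<noteq> 0 \<and> Yvac \<alpha> A n' b \<noteq> 0} \<noteq> {}"
    then obtain j m where "Yvac \<alpha> A n (j, m) \<noteq> 0" "Yvac \<alpha> A n' (j, m) \<noteq> 0" by auto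
    from Yvac_nonzero_imp[OF this(1)] Yvac_nonzero_imp[OF this(2)]
    obtain M M' where "M \<in> partitions (nat n)" "M' \<in> partitions (nat n')" "mono_of M = mono_of M'"
      "0 \<le> n" "0 \<le> n'"
      by auto
    then show False
      using assms mono_of_eq_iff[of M M'] by (auto simp: partitions_def)
  qed
  then show ?thesis unfolding inner_vec_def by (simp only: sum.empty)
qed

definition vac_norm2 :: "real \<Rightarrow> int \<Rightarrow> real" where
  "vac_norm2 \<alpha> n = (if 0 \<le> n then pochhammer (\<alpha>\<^sup>2) (nat n) / fact (nat n) else 0)"

lemma inner_vec_Yvac: "inner_vec (Yvac \<alpha> A n) (Yvac \<alpha> A n) = complex_of_real (vac_norm2 \<alpha> n)"
proof (cases "0 \<le> n")
  case False
  then show ?thesis by (simp add: inner_vec_def Yvac_def vac_norm2_def case_prod_beta)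
next
  case True
  let ?k = "nat n"
  have inj: "inj_on (\<lambda>M. (A, mono_of M)) (partitions ?k)"
    by (auto simp: inj_on_def partitions_def mono_of_eq_iff)
  have "inner_vec (Yvac \<alpha> A n) (Yvac \<alpha> A n) =
      (\<Sum>b\<in>(\<lambda>M. (A, mono_of M)) ` partitions ?k. cnj (Yvac \<alpha> A n b) * Yvac \<alpha> A n b * complex_of_real (weight (snd b)))"
    by (rule inner_vec_eq_sum) (auto simp: finite_partitions dest: Yvac_nonzero_imp)
  also have "\<dots> = (\<Sum>M\<in>partitions ?k. complex_of_real ((monomial_coeff \<alpha> M)\<^sup>2 * weight (mono_of M)))"
    using True by (auto simp: sum.reindex[OF inj] Yvac_def Em_vac_coeff_mono_of power2_eq_square intro!: sum.cong)
  also have "\<dots> = (\<Sum>M\<in>partitions ?k. complex_of_real (cycle_weight (\<alpha>\<^sup>2) M))"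
    by (intro sum.cong refl) (simp add: monomial_coeff_sq_weight partitions_def)
  also have "\<dots> = complex_of_real (vac_norm2 \<alpha> n)"
    using True by (simp add: sum_partitions_cycle_weight vac_norm2_def flip: of_real_sum)
  finally show ?thesis .
qed

lemma vac_norm2_nonneg: "0 \<le> vac_norm2 \<alpha> n"
  by (cases "\<alpha> = 0") (simp_all add: vac_norm2_def pochhammer_0_left pochhammer_nonneg)

section \<open>Divergence\<close>

lemma vac_norm2_product_lower:
  assumes \<alpha>: "1/2 \<le> \<alpha>\<^sup>2" and n: "1 \<le> n" "1 \<le> n + s"
  shows "1 / (4 * (real_of_int n + \<bar>real_of_int s\<bar>)) \<le> vac_norm2 \<alpha> n * vac_norm2 \<alpha> (n + s)"
proof -
  define K where "K = real_of_int n + \<bar>real_of_int s\<bar>"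
  let ?x = "vac_norm2 \<alpha> n" and ?y = "vac_norm2 \<alpha> (n + s)"
  have "1 \<le> 4 * K * ?x\<^sup>2"
  proof -
    have "1 \<le> 4 * real_of_int n * ?x\<^sup>2"
      using pochhammer_div_fact_lower[OF \<alpha>, of "nat n"] n by (simp add: vac_norm2_def)
    also have "\<dots> \<le> 4 * K * ?x\<^sup>2" by (intro mult_right_mono) (auto simp: K_def)
    finally show ?thesis .
  qed
  moreover have "1 \<le> 4 * K * ?y\<^sup>2"
  proof -
    have "1 \<le> 4 * real_of_int (n + s) * ?y\<^sup>2"
      using pochhammer_div_fact_lower[OF \<alpha>, of "nat (n + s)"] n by (simp add: vac_norm2_def)
    also have "\<dots> \<le> 4 * K * ?y\<^sup>2" by (intro mult_right_mono) (auto simp: K_def)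
    finally show ?thesis .
  qed
  ultimately have "1 * 1 \<le> (4 * K * ?x\<^sup>2) * (4 * K * ?y\<^sup>2)"
    by (rule mult_mono) (use n in \<open>simp_all add: K_def\<close>)
  also have "\<dots> = (4 * K * (?x * ?y))\<^sup>2"
    by (simp only: power2_eq_square mult_ac)
  finally have "1\<^sup>2 \<le> (4 * K * (?x * ?y))\<^sup>2" by simp
  moreover have "0 \<le> 4 * K * (?x * ?y)"
    using n by (simp add: K_def vac_norm2_nonneg)
  ultimately have "1 \<le> 4 * K * (?x * ?y)"
    by (rule power2_le_imp_le)
  moreover have "0 < K" using n by (simp add: K_def)
  ultimately show ?thesis by (simp add: K_def field_simps)
qed

lemma not_summable_vac_norm2_product:
  assumes \<alpha>: "1/2 \<le> \<alpha>\<^sup>2"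
  shows "\<not> summable (\<lambda>k. vac_norm2 \<alpha> (int k) * vac_norm2 \<alpha> (int k + s))"
proof
  assume "summable (\<lambda>k. vac_norm2 \<alpha> (int k) * vac_norm2 \<alpha> (int k + s))"
  define c where "c = nat \<bar>s\<bar> + 1"
  have "summable (\<lambda>k. vac_norm2 \<alpha> (int (k + c)) * vac_norm2 \<alpha> (int (k + c) + s))"
    using summable_iff_shift[of "\<lambda>k. vac_norm2 \<alpha> (int k) * vac_norm2 \<alpha> (int k + s)" c] \<open>summable _\<close> by simp
  moreover have "norm (inverse (real (k + c)) / 8) \<le> vac_norm2 \<alpha> (int (k + c)) * vac_norm2 \<alpha> (int (k + c) + s)" for k
  proof -
    have "inverse (real (k + c)) / 8 \<le> 1 / (4 * (real (k + c) + \<bar>real_of_int s\<bar>))"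
      by (simp add: c_def field_simps)
    also have "\<dots> \<le> vac_norm2 \<alpha> (int (k + c)) * vac_norm2 \<alpha> (int (k + c) + s)"
      using vac_norm2_product_lower[OF \<alpha>, of "int (k + c)" s] by (simp add: c_def)
    finally show ?thesis by simp
  qed
  ultimately have "summable (\<lambda>k. inverse (real (k + c)) / 8)"
    by (rule summable_comparison_test'[where N = 0])
  then have "summable (\<lambda>k. inverse (real (k + c)))"
    using summable_divide[of _ "1/8"] by simp
  then have "summable (\<lambda>k. inverse (real k) :: real)"
    using summable_iff_shift[of "\<lambda>k. inverse (real k) :: real" c] by simp
  then show False using not_summable_harmonic by blast
qed

lemma not_summable_on_int:
  fixes f :: "int \<Rightarrow> real"
  assumes "\<And>n. 0 \<le> f n" and "\<not> summable (\<lambda>k. f (int k))"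
  shows "\<not> f summable_on UNIV"
proof
  assume "f summable_on UNIV"
  then have "f summable_on range int" by (rule summable_on_subset_banach) auto
  then have "(f \<circ> int) summable_on UNIV" by (subst (asm) summable_on_reindex) auto
  then show False
    using assms by (subst (asm) summable_on_UNIV_nonneg_real_iff) (auto simp: o_def)
qed

lemma annulus_sum_unbounded:
  fixes f :: "int \<Rightarrow> real"
  assumes nonneg: "\<And>n. 0 \<le> f n" and div: "\<not> summable (\<lambda>k. f (int k))"
  shows "\<exists>M\<ge>N. c < (\<Sum>n\<in>{- int M..int M} - {- int N..int N}. f n)"
proof -
  let ?f = "\<lambda>k. f (int k)"
  have "\<not> (\<forall>M. (\<Sum>i<M. ?f i) \<le> (\<Sum>i<Suc N. ?f i) + \<bar>c\<bar>)"
    using div summableI_nonneg_bounded[of ?f] nonneg by blast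
  then obtain M where M: "(\<Sum>i<Suc N. ?f i) + \<bar>c\<bar> < (\<Sum>i<M. ?f i)"
    by (auto simp: not_le)
  have "Suc N \<le> M"
  proof (rule ccontr)
    assume "\<not> Suc N \<le> M"
    then have "(\<Sum>i<M. ?f i) \<le> (\<Sum>i<Suc N. ?f i)" by (intro sum_mono2) (auto simp: nonneg)
    then show False using M by simp
  qed
  then have "(\<Sum>i<M. ?f i) = (\<Sum>i<Suc N. ?f i) + (\<Sum>i\<in>{Suc N..<M}. ?f i)"
    using sum.atLeastLessThan_concat[of 0 "Suc N" M ?f] by (simp only: lessThan_atLeast0)
  also have "(\<Sum>i\<in>{Suc N..<M}. ?f i) = (\<Sum>n\<in>int ` {Suc N..<M}. f n)"
    by (simp add: sum.reindex)
  also have "(\<Sum>n\<in>int ` {Suc N..<M}. f n) \<le> (\<Sum>n\<in>{- int M..int M} - {- int N..int N}. f n)"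
    by (rule sum_mono2) (auto simp: nonneg)
  finally have "c < (\<Sum>n\<in>{- int M..int M} - {- int N..int N}. f n)"
    using M by linarith
  then show ?thesis using \<open>Suc N \<le> M\<close> by (intro exI[of _ M]) simp
qed

lemma psum_not_Cauchy:
  assumes fin: "\<And>n. finite {b. v n b \<noteq> 0}"
    and orth: "\<And>n n'. n \<noteq> n' \<Longrightarrow> inner_tens (v n) (v n') = 0"
    and div: "\<not> summable (\<lambda>k. (tnorm (v (int k)))\<^sup>2)"
  shows "\<not> (\<forall>\<epsilon>>0. \<exists>N. \<forall>M\<ge>N. \<forall>M'\<ge>N. tnorm (\<lambda>x. psum v M x - psum v M' x) < \<epsilon>)"
proof
  assume "\<forall>\<epsilon>>0. \<exists>N. \<forall>M\<ge>N. \<forall>M'\<ge>N. tnorm (\<lambda>x. psum v M x - psum v M' x) < \<epsilon>"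
  then obtain N where N: "\<And>M. M \<ge> N \<Longrightarrow> tnorm (\<lambda>x. psum v M x - psum v N x) < 1"
    using zero_less_one by blast
  obtain M where "M \<ge> N" and "1 < (\<Sum>n\<in>{- int M..int M} - {- int N..int N}. (tnorm (v n))\<^sup>2)"
    using annulus_sum_unbounded[OF _ div] by auto
  then have "1 < (tnorm (\<lambda>x. psum v M x - psum v N x))\<^sup>2"
    by (simp add: tnorm_psum_diff fin orth)
  then have "1 < tnorm (\<lambda>x. psum v M x - psum v N x)"
    by (metis power2_less_imp_less power_one tnorm_nonneg)
  with N[OF \<open>M \<ge> N\<close>] show False by simp
qed

theorem mainTheorem2:
  fixes \<alpha>0 \<alpha> :: real and s :: int
  assumes "0 < \<bar>\<alpha>0\<bar>" and "\<bar>\<alpha>0\<bar> \<le> 1"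
    and "\<exists>a::int. \<alpha> = of_int a * \<alpha>0"
    and "1 / sqrt 2 \<le> \<bar>\<alpha>\<bar>" and "\<bar>\<alpha>\<bar> \<le> 1"
  shows "let d = \<alpha>\<^sup>2 / 2;
             v = (\<lambda>n::int. tensor (Ycoef \<alpha>0 \<alpha> (- of_int n - d) (vac 0))
                                  (Ycoef \<alpha>0 \<alpha> (- of_int n - d - of_int s) (vac 0)))
         in (\<forall>n n'. n \<noteq> n' \<longrightarrow> inner_tens (v n) (v n') = 0)
            \<and> \<not> ((\<lambda>n. (tnorm (v n))\<^sup>2) summable_on (UNIV :: int set))
            \<and> \<not> (\<forall>\<epsilon>>0. \<exists>N. \<forall>M\<ge>N. \<forall>M'\<ge>N.
                    tnorm (\<lambda>x. psum v M x - psum v M' x) < \<epsilon>)"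
proof -
  obtain A :: int where A: "\<alpha> = of_int A * \<alpha>0" using assms(3) by blast
  have \<alpha>: "1/2 \<le> \<alpha>\<^sup>2"
    using power_mono[OF assms(4), of 2] by (simp add: power_divide)
  define v where "v = (\<lambda>n. tensor (Yvac \<alpha> A n) (Yvac \<alpha> A (n + s)))"
  have Y: "Ycoef \<alpha>0 \<alpha> (- of_int n - \<alpha>\<^sup>2 / 2) (vac 0) = Yvac \<alpha> A n"
    "Ycoef \<alpha>0 \<alpha> (- of_int n - \<alpha>\<^sup>2 / 2 - of_int s) (vac 0) = Yvac \<alpha> A (n + s)" for n
    using assms(1) by (intro Ycoef_vac[OF _ A]; simp)+
  have orth: "inner_tens (v n) (v n') = 0" if "n \<noteq> n'" for n n'
    using that by (simp add: v_def inner_tens_tensor inner_vec_Yvac_orthogonal)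
  have fin: "finite {b. v n b \<noteq> 0}" for n
    by (simp add: v_def finite_support_tensor fin_vec_Yvac)
  have norm: "(tnorm (v n))\<^sup>2 = vac_norm2 \<alpha> n * vac_norm2 \<alpha> (n + s)" for n
    by (simp add: tnorm_sq v_def inner_tens_tensor inner_vec_Yvac)
  have div: "\<not> summable (\<lambda>k. (tnorm (v (int k)))\<^sup>2)"
    using not_summable_vac_norm2_product[OF \<alpha>] by (simp add: norm)
  show ?thesis
    using orth not_summable_on_int[OF _ div] psum_not_Cauchy[OF fin orth div]
    unfolding Let_def Y v_def by simp
qed

end
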